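(* Let $G$ be a graph with $m$ edges and $n^+$ positive adjacency eigenvalues. For every integer $k$ with $1\le k\le n^+$, \[6\,t(G)\ \ge\ \frac{1}{\sqrt{k}}\,\big(s_k\big)^{3/2}-\big(2m-s_k\big)^{3/2}.\]
   Context: For a simple graph $G$ on $n$ vertices and $m$ edges, let $\lambda_1\ge\cdots\ge\lambda_n$ be the eigenvalues of its adjacency matrix; $n^+$ is the number of positive eigenvalues. $t(G)$ denotes the number of triangles in $G$, and $s_k=\sum_{i=1}^k\lambda_i^2$. *)

theory Defs
  imports "Jordan_Normal_Form.Char_Poly"
begin

text \<open>A simple graph on the vertex set {0..<n}, given by a symmetric irreflexive
adjacency relation E (only its restriction to {0..<n} matters).\<close>
definition simple_graph :: "nat \<Rightarrow> (nat \<Rightarrow> nat \<Rightarrow> bool) \<Rightarrow> bool" where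
  "simple_graph n E \<longleftrightarrow> (\<forall>i<n. \<forall>j<n. E i j \<longleftrightarrow> E j i) \<and> (\<forall>i<n. \<not> E i i)"

definition adj_matrix :: "nat \<Rightarrow> (nat \<Rightarrow> nat \<Rightarrow> bool) \<Rightarrow> real mat" where
  "adj_matrix n E = mat n n (\<lambda>(i,j). if E i j then 1 else 0)"

definition num_edges :: "nat \<Rightarrow> (nat \<Rightarrow> nat \<Rightarrow> bool) \<Rightarrow> nat" where
  "num_edges n E = card {{i,j} | i j. i < n \<and> j < n \<and> E i j}"

definition num_triangles :: "nat \<Rightarrow> (nat \<Rightarrow> nat \<Rightarrow> bool) \<Rightarrow> nat" where
  "num_triangles n E = card {{i,j,l} | i j l. i < n \<and> j < n \<and> l < n \<and> E i j \<and> E j l \<and> E i l}"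

text \<open>The eigenvalues lambda_1 >= ... >= lambda_n of a real matrix whose characteristic
polynomial splits over the reals (as is the case for symmetric matrices), listed with
algebraic multiplicity in non-increasing order.\<close>
definition eigenvalues_desc :: "real mat \<Rightarrow> real list" where
  "eigenvalues_desc A = (THE xs. sorted_wrt (\<ge>) xs \<and>
      char_poly A = prod_list (map (\<lambda>x. [:- x, 1:]) xs))"

definition graph_eigs :: "nat \<Rightarrow> (nat \<Rightarrow> nat \<Rightarrow> bool) \<Rightarrow> real list" where
  "graph_eigs n E = eigenvalues_desc (adj_matrix n E)"

definition n_plus :: "nat \<Rightarrow> (nat \<Rightarrow> nat \<Rightarrow> bool) \<Rightarrow> nat" where
  "n_plus n E = length (filter (\<lambda>x. x > 0) (graph_eigs n E))"

definition s_k :: "nat \<Rightarrow> (nat \<Rightarrow> nat \<Rightarrow> bool) \<Rightarrow> nat \<Rightarrow> real" where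
  "s_k n E k = (\<Sum>i<k. (graph_eigs n E ! i)^2)"

end

theory Submission
  imports Defs "HOL-Analysis.Convex" Jordan_Normal_Form.Schur_Decomposition
begin

text \<open>Let \<open>\<lambda>\<^sub>1 \<ge> \<dots> \<ge> \<lambda>\<^sub>n\<close> be the adjacency eigenvalues. The traces of \<open>A\<^sup>2\<close> and \<open>A\<^sup>3\<close>
  give \<open>\<Sum>\<^sub>i \<lambda>\<^sub>i\<^sup>2 = 2m\<close> and \<open>\<Sum>\<^sub>i \<lambda>\<^sub>i\<^sup>3 = 6t\<close>; split the cube sum after the first \<open>k\<close>
  terms. These \<open>k\<close> eigenvalues are positive, so the Cauchy-Schwarz inequalities
  \<open>(\<Sum> \<lambda>\<^sub>i\<^sup>2)\<^sup>2 \<le> (\<Sum> \<lambda>\<^sub>i\<^sup>3) (\<Sum> \<lambda>\<^sub>i)\<close> and \<open>(\<Sum> \<lambda>\<^sub>i)\<^sup>2 \<le> k \<Sum> \<lambda>\<^sub>i\<^sup>2\<close> yield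
  \<open>s\<^sub>k\<^sup>3 \<le> k (\<Sum> \<lambda>\<^sub>i\<^sup>3)\<^sup>2\<close>, i.e. their cube sum is at least \<open>s\<^sub>k powr (3/2) / sqrt k\<close>.
  Each remaining eigenvalue satisfies \<open>\<bar>\<lambda>\<^sub>i\<bar> \<le> sqrt (2m - s\<^sub>k)\<close>, hence
  \<open>\<lambda>\<^sub>i\<^sup>3 \<ge> - sqrt (2m - s\<^sub>k) \<lambda>\<^sub>i\<^sup>2\<close>, and summing bounds their cube sum below by
  \<open>- (2m - s\<^sub>k) powr (3/2)\<close>.\<close>

lemma powr_three_halves: "0 \<le> x \<Longrightarrow> (x::real) powr (3/2) = x * sqrt x"
  by (simp add: powr_add[of x 1 "1/2", simplified] powr_half_sqrt)

lemma sum_squares_powr_three_halves_le_sum_cubes: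
  fixes a :: "'a \<Rightarrow> real"
  assumes nonneg: "\<And>i. i \<in> I \<Longrightarrow> 0 \<le> a i" and "finite I" "I \<noteq> {}"
  shows "(\<Sum>i\<in>I. a i ^ 2) powr (3/2) / sqrt (card I) \<le> (\<Sum>i\<in>I. a i ^ 3)"
proof -
  define S T U where "S = (\<Sum>i\<in>I. a i ^ 2)" and "T = (\<Sum>i\<in>I. a i ^ 3)" and "U = (\<Sum>i\<in>I. a i)"
  define k where "k = real (card I)"
  have "k > 0" using assms unfolding k_def by (simp add: card_gt_0_iff)
  have "S \<ge> 0" "T \<ge> 0"
    unfolding S_def T_def using nonneg by (auto intro: sum_nonneg)
  have "S\<^sup>2 \<le> T * U"
  proof -
    have "(\<Sum>i\<in>I. (a i * sqrt (a i)) * sqrt (a i))\<^sup>2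
        \<le> (\<Sum>i\<in>I. (a i * sqrt (a i))\<^sup>2) * (\<Sum>i\<in>I. (sqrt (a i))\<^sup>2)"
      by (rule Cauchy_Schwarz_ineq_sum)
    moreover have "(a i * sqrt (a i)) * sqrt (a i) = a i ^ 2" "(a i * sqrt (a i))\<^sup>2 = a i ^ 3"
      "(sqrt (a i))\<^sup>2 = a i" if "i \<in> I" for i
      using nonneg[OF that] by (simp_all add: power2_eq_square power3_eq_cube)
    ultimately show ?thesis unfolding S_def T_def U_def by (simp cong: sum.cong)
  qed
  have "U\<^sup>2 \<le> k * S"
    using sum_squared_le_sum_of_squares[of a I] unfolding S_def U_def k_def by (simp add: mult.commute)
  have "S ^ 4 \<le> T\<^sup>2 * (k * S)"
  proof -
    have "S ^ 4 = (S\<^sup>2)\<^sup>2" by simp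
    also have "\<dots> \<le> (T * U)\<^sup>2" using \<open>S\<^sup>2 \<le> T * U\<close> by (intro power_mono) auto
    also have "\<dots> = T\<^sup>2 * U\<^sup>2" by (rule power_mult_distrib)
    also have "\<dots> \<le> T\<^sup>2 * (k * S)" using \<open>U\<^sup>2 \<le> k * S\<close> by (intro mult_left_mono) auto
    finally show ?thesis .
  qed
  hence "S ^ 3 \<le> k * T\<^sup>2"
    using \<open>S \<ge> 0\<close> \<open>k > 0\<close>
    by (cases "S = 0") (simp, auto simp: numeral_eq_Suc mult_le_cancel_left_pos mult_ac)
  hence "S powr (3/2) \<le> sqrt k * T"
    using \<open>S \<ge> 0\<close> \<open>T \<ge> 0\<close> real_sqrt_le_mono[of "S^3" "k * T\<^sup>2"]
    by (simp add: powr_three_halves real_sqrt_mult power3_eq_cube)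
  thus ?thesis using \<open>k > 0\<close> unfolding S_def T_def k_def by (simp add: divide_le_eq mult.commute)
qed

lemma neg_sum_squares_powr_three_halves_le_sum_cubes:
  fixes a :: "'a \<Rightarrow> real"
  assumes "finite I"
  shows "- ((\<Sum>i\<in>I. a i ^ 2) powr (3/2)) \<le> (\<Sum>i\<in>I. a i ^ 3)"
proof -
  define R where "R = (\<Sum>i\<in>I. a i ^ 2)"
  have "R \<ge> 0" unfolding R_def by (simp add: sum_nonneg)
  have "- (sqrt R * a i ^ 2) \<le> a i ^ 3" if "i \<in> I" for i
  proof -
    have "a i ^ 2 \<le> R" unfolding R_def using assms that by (intro member_le_sum) auto
    hence "\<bar>a i\<bar> \<le> sqrt R" using real_sqrt_le_mono by fastforce
    hence "- (sqrt R * a i ^ 2) \<le> - (\<bar>a i\<bar> * a i ^ 2)" by (simp add: mult_right_mono)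
    also have "\<dots> \<le> a i ^ 3" by (simp add: abs_if power2_eq_square power3_eq_cube)
    finally show ?thesis .
  qed
  hence "(\<Sum>i\<in>I. - (sqrt R * a i ^ 2)) \<le> (\<Sum>i\<in>I. a i ^ 3)" by (rule sum_mono)
  moreover have "R * sqrt R = (\<Sum>i\<in>I. a i ^ 2 * sqrt R)"
    unfolding R_def by (rule sum_distrib_right)
  ultimately show ?thesis
    using \<open>R \<ge> 0\<close> by (simp add: R_def[symmetric] powr_three_halves sum_negf mult.commute)
qed

lemma sorted_desc_nth_pos:
  fixes xs :: "real list"
  assumes "sorted_wrt (\<ge>) xs" and "i < length (filter (\<lambda>x. x > 0) xs)"
  shows "xs ! i > 0"
  using assms
proof (induction xs arbitrary: i)
  case (Cons x xs)
  show ?case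
  proof (cases "x > 0")
    case True
    thus ?thesis using Cons by (cases i) auto
  next
    case False
    hence "filter (\<lambda>x. x > 0) (x # xs) = []" using Cons.prems(1) by (auto simp: filter_empty_conv)
    thus ?thesis using Cons.prems(2) by simp
  qed
qed simp

lemma sorted_desc_sum_cubes_lower_bound:
  fixes xs :: "real list"
  assumes sorted: "sorted_wrt (\<ge>) xs" and "1 \<le> k" and k: "k \<le> length (filter (\<lambda>x. x > 0) xs)"
  defines "s \<equiv> (\<Sum>i<k. xs ! i ^ 2)"
  shows "(1 / sqrt k) * s powr (3/2) - ((\<Sum>i<length xs. xs ! i ^ 2) - s) powr (3/2)
           \<le> (\<Sum>i<length xs. xs ! i ^ 3)"
proof -
  have "k \<le> length xs" using k length_filter_le[of "\<lambda>x. x > 0" xs] by linarith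
  hence split: "(\<Sum>i<length xs. f i) = (\<Sum>i<k. f i) + (\<Sum>i\<in>{k..<length xs}. f i)"
    for f :: "nat \<Rightarrow> real"
    by (simp add: lessThan_atLeast0 sum.atLeastLessThan_concat)
  have "s powr (3/2) / sqrt k \<le> (\<Sum>i<k. xs ! i ^ 3)"
    unfolding s_def using sorted_desc_nth_pos[OF sorted] k \<open>1 \<le> k\<close>
    by (intro sum_squares_powr_three_halves_le_sum_cubes[of "{..<k}" "\<lambda>i. xs ! i", simplified])
       (auto simp: less_imp_le lessThan_empty_iff)
  moreover have "- ((\<Sum>i\<in>{k..<length xs}. xs ! i ^ 2) powr (3/2)) \<le> (\<Sum>i\<in>{k..<length xs}. xs ! i ^ 3)"
    by (rule neg_sum_squares_powr_three_halves_le_sum_cubes) simp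
  ultimately show ?thesis unfolding split s_def by simp
qed

definition mat_trace :: "'a::comm_ring_1 mat \<Rightarrow> 'a" where
  "mat_trace M = (\<Sum>i<dim_row M. M $$ (i,i))"

lemma index_mult_mat_sum:
  assumes "X \<in> carrier_mat n m" "Y \<in> carrier_mat m k" "i < n" "j < k"
  shows "(X * Y) $$ (i,j) = (\<Sum>l<m. X $$ (i,l) * Y $$ (l,j))"
  using assms by (simp add: scalar_prod_def row_def col_def lessThan_atLeast0)

lemma mat_trace_mult_comm:
  fixes X Y :: "'a::comm_ring_1 mat"
  assumes "X \<in> carrier_mat n m" and "Y \<in> carrier_mat m n"
  shows "mat_trace (X * Y) = mat_trace (Y * X)"
proof -
  have "mat_trace (X * Y) = (\<Sum>i<n. \<Sum>j<m. X $$ (i,j) * Y $$ (j,i))"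
    unfolding mat_trace_def using assms by (simp add: scalar_prod_def row_def col_def lessThan_atLeast0)
  also have "\<dots> = (\<Sum>j<m. \<Sum>i<n. Y $$ (j,i) * X $$ (i,j))"
    by (subst sum.swap) (simp add: mult.commute)
  also have "\<dots> = mat_trace (Y * X)"
    unfolding mat_trace_def using assms by (simp add: scalar_prod_def row_def col_def lessThan_atLeast0)
  finally show ?thesis .
qed

lemma upper_triangular_mult_diag:
  fixes C D :: "'a::comm_ring_1 mat"
  assumes C: "C \<in> carrier_mat n n" and D: "D \<in> carrier_mat n n"
    and "upper_triangular C" "upper_triangular D"
  shows "upper_triangular (C * D)" and "\<And>i. i < n \<Longrightarrow> (C * D) $$ (i,i) = C $$ (i,i) * D $$ (i,i)"
proof -
  have zero: "C $$ (i,l) * D $$ (l,j) = 0" if "i < n" "l < n" "j < i" for i j l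
    using that assms C D by (cases "l < i") (auto simp: upper_triangularD)
  show "upper_triangular (C * D)"
  proof
    fix i j assume "j < i" "i < dim_row (C * D)"
    hence "i < n" "j < n" using C by auto
    thus "(C * D) $$ (i,j) = 0" using C D zero \<open>j < i\<close> by (simp add: index_mult_mat_sum[OF C D] del: index_mult_mat(1))
  qed
  fix i assume "i < n"
  have "C $$ (i,l) * D $$ (l,i) = 0" if "l < n" "l \<noteq> i" for l
    using that assms C D \<open>i < n\<close> by (cases "l < i") (auto simp: upper_triangularD)
  thus "(C * D) $$ (i,i) = C $$ (i,i) * D $$ (i,i)"
    using C D \<open>i < n\<close>
    by (simp add: index_mult_mat_sum[OF C D] sum.remove[of _ i] del: index_mult_mat(1))
qed

lemma upper_triangular_pow_diag:
  fixes B :: "'a::comm_ring_1 mat"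
  assumes B: "B \<in> carrier_mat n n" and "upper_triangular B"
  shows "upper_triangular (B ^\<^sub>m k) \<and> (\<forall>i<n. (B ^\<^sub>m k) $$ (i,i) = B $$ (i,i) ^ k)"
proof (induction k)
  case (Suc k)
  have "B ^\<^sub>m k \<in> carrier_mat n n" using B by simp
  from upper_triangular_mult_diag[OF this B _ assms(2)] Suc show ?case by auto
qed (use B in auto)

lemma mat_trace_pow_eq_sum_pow_eigenvalues:
  fixes A :: "'a::conjugatable_ordered_field mat"
  assumes A: "A \<in> carrier_mat n n" and "char_poly A = (\<Prod>x\<leftarrow>xs. [:- x, 1:])"
  shows "length xs = n" and "mat_trace (A ^\<^sub>m k) = (\<Sum>i<n. (xs ! i) ^ k)"
proof -
  obtain B P Q where "schur_decomposition A xs = (B,P,Q)" by (cases "schur_decomposition A xs")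
  with schur_decomposition[OF assms] have sim: "similar_mat_wit A B P Q"
    and "upper_triangular B" and diag: "diag_mat B = xs" by auto
  from sim A have B: "B \<in> carrier_mat n n" and P: "P \<in> carrier_mat n n"
    and Q: "Q \<in> carrier_mat n n" and "Q * P = 1\<^sub>m n"
    unfolding similar_mat_wit_def Let_def by auto
  show "length xs = n" using diag B unfolding diag_mat_def by auto
  have diag_nth: "xs ! i = B $$ (i,i)" if "i < n" for i using diag B that unfolding diag_mat_def by auto
  have Bk: "B ^\<^sub>m k \<in> carrier_mat n n" using B by simp
  have "mat_trace (A ^\<^sub>m k) = mat_trace ((P * B ^\<^sub>m k) * Q)"
    using similar_mat_wit_pow_id[OF sim] by simp
  also have "\<dots> = mat_trace (Q * (P * B ^\<^sub>m k))"
    using P Bk Q by (intro mat_trace_mult_comm[of _ n n]) auto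
  also have "Q * (P * B ^\<^sub>m k) = B ^\<^sub>m k"
    using P Bk Q \<open>Q * P = 1\<^sub>m n\<close> by (simp add: assoc_mult_mat[symmetric] left_mult_one_mat)
  also have "mat_trace (B ^\<^sub>m k) = (\<Sum>i<n. (xs ! i) ^ k)"
    using upper_triangular_pow_diag[OF B \<open>upper_triangular B\<close>, of k] B
    by (simp add: mat_trace_def diag_nth)
  finally show "mat_trace (A ^\<^sub>m k) = (\<Sum>i<n. (xs ! i) ^ k)" .
qed

lemma symmetric_quadratic_form_cnj:
  fixes A :: "real mat" and v :: "nat \<Rightarrow> complex"
  assumes "\<And>i j. i < n \<Longrightarrow> j < n \<Longrightarrow> A $$ (i,j) = A $$ (j,i)"
  shows "cnj (\<Sum>i<n. \<Sum>j<n. cnj (v i) * of_real (A $$ (i,j)) * v j)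
       = (\<Sum>i<n. \<Sum>j<n. cnj (v i) * of_real (A $$ (i,j)) * v j)"
proof -
  have "cnj (\<Sum>i<n. \<Sum>j<n. cnj (v i) * of_real (A $$ (i,j)) * v j)
      = (\<Sum>i<n. \<Sum>j<n. cnj (v j) * of_real (A $$ (j,i)) * v i)"
    using assms unfolding cnj_sum by (intro sum.cong refl) (simp add: mult_ac)
  also have "\<dots> = (\<Sum>i<n. \<Sum>j<n. cnj (v i) * of_real (A $$ (i,j)) * v j)"
    by (rule sum.swap)
  finally show ?thesis .
qed

lemma symmetric_real_mat_eigenvalue_real:
  fixes A :: "real mat"
  assumes A: "A \<in> carrier_mat n n"
    and sym: "\<And>i j. i < n \<Longrightarrow> j < n \<Longrightarrow> A $$ (i,j) = A $$ (j,i)"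
    and "eigenvector (map_mat complex_of_real A) v a"
  shows "a \<in> \<real>"
proof -
  have v: "v \<in> carrier_vec n" "v \<noteq> 0\<^sub>v n" and Av: "map_mat of_real A *\<^sub>v v = a \<cdot>\<^sub>v v"
    using assms(3) A unfolding eigenvector_def by auto
  have row: "(\<Sum>j<n. of_real (A $$ (i,j)) * v $ j) = a * v $ i" if "i < n" for i
    using arg_cong[OF Av, of "\<lambda>w. w $ i"] that A v by (simp add: scalar_prod_def lessThan_atLeast0)
  define r where "r = (\<Sum>i<n. (cmod (v $ i))\<^sup>2)"
  have form: "(\<Sum>i<n. \<Sum>j<n. cnj (v $ i) * of_real (A $$ (i,j)) * v $ j) = a * of_real r"
  proof -
    have "(\<Sum>i<n. \<Sum>j<n. cnj (v $ i) * of_real (A $$ (i,j)) * v $ j)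
        = (\<Sum>i<n. a * (cnj (v $ i) * v $ i))"
      by (intro sum.cong refl) (simp add: mult.assoc flip: sum_distrib_left row mult.left_commute)
    moreover have "cnj z * z = of_real ((cmod z)\<^sup>2)" for z
      by (simp add: complex_norm_square mult.commute del: of_real_power)
    ultimately show ?thesis unfolding r_def by (simp add: sum_distrib_left)
  qed
  have "cnj (a * of_real r) = a * of_real r"
    using symmetric_quadratic_form_cnj[where n = n and v = "\<lambda>i. v $ i", OF sym] unfolding form .
  moreover have "r > 0"
  proof -
    obtain i where "i < n" "v $ i \<noteq> 0" using v by (metis eq_vecI carrier_vecD index_zero_vec)
    hence "0 < (cmod (v $ i))\<^sup>2" by simp
    also have "\<dots> \<le> r" unfolding r_def using \<open>i < n\<close> by (intro member_le_sum) auto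
    finally show ?thesis .
  qed
  ultimately show ?thesis by (simp add: Reals_cnj_iff)
qed

lemma symmetric_real_mat_char_poly_splits:
  fixes A :: "real mat"
  assumes A: "A \<in> carrier_mat n n"
    and sym: "\<And>i j. i < n \<Longrightarrow> j < n \<Longrightarrow> A $$ (i,j) = A $$ (j,i)"
  obtains xs where "char_poly A = (\<Prod>x\<leftarrow>xs. [:- x, 1:])"
proof -
  interpret of_real_poly: map_poly_inj_idom_hom "of_real :: real \<Rightarrow> complex" ..
  let ?Ac = "map_mat complex_of_real A"
  have Ac: "?Ac \<in> carrier_mat n n" using A by auto
  obtain zs where zs: "char_poly ?Ac = (\<Prod>z\<leftarrow>zs. [:- z, 1:])"
    using char_poly_factorized[OF Ac] by blast
  have "z \<in> \<real>" if "z \<in> set zs" for z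
  proof -
    have "poly (char_poly ?Ac) z = 0"
      using that unfolding zs poly_prod_list_zero_iff by force
    then obtain v where "eigenvector ?Ac v z"
      using eigenvalue_root_char_poly[OF Ac] unfolding eigenvalue_def by blast
    thus ?thesis using symmetric_real_mat_eigenvalue_real[OF A sym] by blast
  qed
  hence "map_poly of_real (\<Prod>x\<leftarrow>map Re zs. [:- x, 1:]) = char_poly ?Ac"
    unfolding zs
    by (simp add: of_real_poly.hom_prod_list o_def del: of_real_poly.prod_list_map_hom)
       (intro arg_cong[where f = prod_list] map_cong refl, auto elim: Reals_cases)
  hence "map_poly (of_real :: real \<Rightarrow> complex) (char_poly A)
      = map_poly of_real (\<Prod>x\<leftarrow>map Re zs. [:- x, 1:])"
    using of_real_hom.char_poly_hom[OF A] by metis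
  thus ?thesis using that[of "map Re zs"] by simp
qed

lemma order_prod_list_linear:
  "Polynomial.order a (\<Prod>x\<leftarrow>xs. [:- x, 1:]) = count (mset xs) (a::'a::idom)"
proof -
  have "Polynomial.order a (\<Prod>x\<leftarrow>xs. [:- x, 1:]) = (\<Sum>x\<leftarrow>xs. if x = a then 1 else 0)"
    by (subst order_prod_list) (auto simp: order_linear' o_def)
  also have "\<dots> = count (mset xs) a" by (induction xs) auto
  finally show ?thesis .
qed

lemma prod_list_linear_eq_imp_sorted_eq:
  fixes xs ys :: "'a::{idom,linorder} list"
  assumes "sorted_wrt (\<ge>) xs" "sorted_wrt (\<ge>) ys"
    and "(\<Prod>x\<leftarrow>xs. [:- x, 1:]) = (\<Prod>y\<leftarrow>ys. [:- y, 1:])"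
  shows "xs = ys"
proof -
  have "mset xs = mset ys"
    by (rule multiset_eqI) (simp only: order_prod_list_linear[symmetric] assms(3))
  moreover have "sorted (rev xs)" "sorted (rev ys)" using assms(1,2) by (simp_all add: sorted_wrt_rev)
  ultimately show ?thesis by (metis mset_rev properties_for_sort rev_rev_ident)
qed

lemma eigenvalues_desc_eq:
  fixes A :: "real mat"
  assumes "char_poly A = (\<Prod>x\<leftarrow>xs. [:- x, 1:])"
  shows "char_poly A = (\<Prod>x\<leftarrow>eigenvalues_desc A. [:- x, 1:])"
    and "sorted_wrt (\<ge>) (eigenvalues_desc A)"
proof -
  let ?ys = "rev (sort xs)"
  have sorted: "sorted_wrt (\<ge>) ?ys" by (simp add: sorted_wrt_rev)
  have "(\<Prod>x\<leftarrow>?ys. [:- x, 1:]) = (\<Prod>x\<leftarrow>xs. [:- x, 1:])"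
    by (simp only: prod_mset_prod_list[symmetric] mset_map mset_rev mset_sort)
  hence cp: "char_poly A = (\<Prod>x\<leftarrow>?ys. [:- x, 1:])" using assms by simp
  have "eigenvalues_desc A = ?ys"
    unfolding eigenvalues_desc_def
    using sorted cp prod_list_linear_eq_imp_sorted_eq[OF _ sorted] by (intro the_equality) auto
  thus "char_poly A = (\<Prod>x\<leftarrow>eigenvalues_desc A. [:- x, 1:])" "sorted_wrt (\<ge>) (eigenvalues_desc A)"
    using cp sorted by simp_all
qed

lemma card_const_fibres:
  assumes "finite A" and "\<And>x. x \<in> A \<Longrightarrow> card {y\<in>A. f y = f x} = c"
  shows "card A = c * card (f ` A)"
proof -
  have "card A = card (\<Union>b\<in>f ` A. {y\<in>A. f y = b})" by (rule arg_cong[where f = card]) auto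
  also have "\<dots> = (\<Sum>b\<in>f ` A. card {y\<in>A. f y = b})"
    using assms(1) by (intro card_UN_disjoint) auto
  also have "\<dots> = (\<Sum>b\<in>f ` A. c)" using assms(2) by (intro sum.cong refl) auto
  finally show ?thesis by simp
qed

lemma card_ordered_edges:
  assumes "simple_graph n E"
  shows "card {(i,j). i < n \<and> j < n \<and> E i j} = 2 * num_edges n E"
proof -
  let ?P = "{(i,j). i < n \<and> j < n \<and> E i j}"
  let ?f = "\<lambda>(i,j). {i,j} :: nat set"
  have "card ?P = 2 * card (?f ` ?P)"
  proof (rule card_const_fibres)
    show "finite ?P" by (rule finite_subset[of _ "{..<n} \<times> {..<n}"]) auto
    fix x assume "x \<in> ?P"
    then obtain a b where x: "x = (a,b)" and ab: "a < n" "b < n" "E a b" by auto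
    have "a \<noteq> b" "E b a" using ab assms unfolding simple_graph_def by auto
    hence "{y \<in> ?P. ?f y = ?f x} = {(a,b),(b,a)}" using ab unfolding x by (auto simp: doubleton_eq_iff)
    thus "card {y \<in> ?P. ?f y = ?f x} = 2" using \<open>a \<noteq> b\<close> by simp
  qed
  moreover have "{{i,j} | i j. i < n \<and> j < n \<and> E i j} = ?f ` ?P" by auto
  ultimately show ?thesis unfolding num_edges_def by simp
qed

lemma card_ordered_triangles:
  assumes "simple_graph n E"
  shows "card {(i,j,l). i < n \<and> j < n \<and> l < n \<and> E i j \<and> E j l \<and> E i l} = 6 * num_triangles n E"
proof -
  let ?T = "{(i,j,l). i < n \<and> j < n \<and> l < n \<and> E i j \<and> E j l \<and> E i l}"
  let ?f = "\<lambda>(i,j,l). {i,j,l} :: nat set"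
  have symE: "\<And>i j. i < n \<Longrightarrow> j < n \<Longrightarrow> E i j \<Longrightarrow> E j i" and irr: "\<And>i. i < n \<Longrightarrow> \<not> E i i"
    using assms unfolding simple_graph_def by auto
  have "card ?T = 6 * card (?f ` ?T)"
  proof (rule card_const_fibres)
    show "finite ?T" by (rule finite_subset[of _ "{..<n} \<times> {..<n} \<times> {..<n}"]) auto
    fix x assume "x \<in> ?T"
    then obtain a b c where x: "x = (a,b,c)" and abc: "a < n" "b < n" "c < n" "E a b" "E b c" "E a c"
      by auto
    have "a \<noteq> b" "b \<noteq> c" "a \<noteq> c" using abc irr by auto
    have "{y \<in> ?T. ?f y = ?f x} = {(a,b,c),(a,c,b),(b,a,c),(b,c,a),(c,a,b),(c,b,a)}"
    proof (intro equalityI subsetI)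
      fix y assume "y \<in> {y \<in> ?T. ?f y = ?f x}"
      then obtain p q r where y: "y = (p,q,r)" and pqr: "p < n" "q < n" "r < n" "E p q" "E q r" "E p r"
        and same: "{p,q,r} = {a,b,c}" unfolding x by auto
      have "p \<noteq> q" "q \<noteq> r" "p \<noteq> r" using pqr irr by auto
      moreover have "p \<in> {a,b,c}" "q \<in> {a,b,c}" "r \<in> {a,b,c}" "a \<in> {p,q,r}" "b \<in> {p,q,r}" "c \<in> {p,q,r}"
        using same by blast+
      ultimately show "y \<in> {(a,b,c),(a,c,b),(b,a,c),(b,c,a),(c,a,b),(c,b,a)}" unfolding y by auto
    qed (use abc symE x in \<open>auto simp: insert_commute\<close>)
    thus "card {y \<in> ?T. ?f y = ?f x} = 6" using \<open>a \<noteq> b\<close> \<open>b \<noteq> c\<close> \<open>a \<noteq> c\<close> by simp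
  qed
  moreover have "{{i,j,l} | i j l. i < n \<and> j < n \<and> l < n \<and> E i j \<and> E j l \<and> E i l} = ?f ` ?T"
    by auto
  ultimately show ?thesis unfolding num_triangles_def by simp
qed

lemma mat_trace_adj_matrix_pow:
  assumes sg: "simple_graph n E"
  shows "mat_trace (adj_matrix n E ^\<^sub>m 2) = 2 * real (num_edges n E)"
    and "mat_trace (adj_matrix n E ^\<^sub>m 3) = 6 * real (num_triangles n E)"
proof -
  let ?A = "adj_matrix n E"
  have A: "?A \<in> carrier_mat n n" unfolding adj_matrix_def by simp
  have entry: "?A $$ (i,j) = of_bool (E i j)" if "i < n" "j < n" for i j
    using that unfolding adj_matrix_def by simp
  have symE: "E i j = E j i" if "i < n" "j < n" for i j
    using that sg unfolding simple_graph_def by auto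
  have "mat_trace (?A ^\<^sub>m 2) = (\<Sum>i<n. (?A * ?A) $$ (i,i))"
    using A by (simp add: numeral_2_eq_2 mat_trace_def)
  also have "\<dots> = (\<Sum>i<n. \<Sum>j<n. ?A $$ (i,j) * ?A $$ (j,i))"
    by (intro sum.cong refl index_mult_mat_sum[OF A A]) auto
  also have "\<dots> = (\<Sum>i<n. \<Sum>j<n. of_bool (E i j))"
    by (intro sum.cong refl) (auto simp: entry symE)
  also have "\<dots> = (\<Sum>x\<in>{..<n} \<times> {..<n}. of_bool (E (fst x) (snd x)))"
    by (simp only: sum.cartesian_product case_prod_beta')
  also have "\<dots> = real (card {(i,j). i < n \<and> j < n \<and> E i j})"
    by (simp add: Int_def) (rule arg_cong[where f = card], auto)
  finally show "mat_trace (?A ^\<^sub>m 2) = 2 * real (num_edges n E)"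
    unfolding card_ordered_edges[OF sg] by simp
  have AA: "?A * ?A \<in> carrier_mat n n" using A by simp
  have "mat_trace (?A ^\<^sub>m 3) = (\<Sum>i<n. (?A * ?A * ?A) $$ (i,i))"
    using A by (simp add: numeral_3_eq_3 mat_trace_def)
  also have "\<dots> = (\<Sum>i<n. \<Sum>l<n. (?A * ?A) $$ (i,l) * ?A $$ (l,i))"
    by (intro sum.cong refl index_mult_mat_sum[OF AA A]) auto
  also have "\<dots> = (\<Sum>i<n. \<Sum>l<n. \<Sum>j<n. ?A $$ (i,j) * ?A $$ (j,l) * ?A $$ (l,i))"
    by (intro sum.cong refl) (simp add: index_mult_mat_sum[OF A A] sum_distrib_right)
  also have "\<dots> = (\<Sum>i<n. \<Sum>j<n. \<Sum>l<n. ?A $$ (i,j) * ?A $$ (j,l) * ?A $$ (l,i))"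
    by (intro sum.cong refl sum.swap)
  also have "\<dots> = (\<Sum>i<n. \<Sum>j<n. \<Sum>l<n. of_bool (E i j \<and> E j l \<and> E i l))"
    by (intro sum.cong refl) (auto simp: entry symE)
  also have "\<dots> = (\<Sum>x\<in>{..<n} \<times> {..<n} \<times> {..<n}.
      of_bool (E (fst x) (fst (snd x)) \<and> E (fst (snd x)) (snd (snd x)) \<and> E (fst x) (snd (snd x))))"
    by (simp only: sum.cartesian_product case_prod_beta')
  also have "\<dots> = real (card {(i,j,l). i < n \<and> j < n \<and> l < n \<and> E i j \<and> E j l \<and> E i l})"
    by (simp add: Int_def) (rule arg_cong[where f = card], auto)
  finally show "mat_trace (?A ^\<^sub>m 3) = 6 * real (num_triangles n E)"
    unfolding card_ordered_triangles[OF sg] by simp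
qed

lemma graph_eigs_moments:
  assumes sg: "simple_graph n E"
  shows "sorted_wrt (\<ge>) (graph_eigs n E)" and "length (graph_eigs n E) = n"
    and "(\<Sum>i<n. graph_eigs n E ! i ^ 2) = 2 * real (num_edges n E)"
    and "(\<Sum>i<n. graph_eigs n E ! i ^ 3) = 6 * real (num_triangles n E)"
proof -
  let ?A = "adj_matrix n E"
  have A: "?A \<in> carrier_mat n n" unfolding adj_matrix_def by simp
  have "?A $$ (i,j) = ?A $$ (j,i)" if "i < n" "j < n" for i j
    using that sg unfolding adj_matrix_def simple_graph_def by auto
  then obtain xs where "char_poly ?A = (\<Prod>x\<leftarrow>xs. [:- x, 1:])"
    using symmetric_real_mat_char_poly_splits[OF A] by blast
  note eigs = eigenvalues_desc_eq[OF this, folded graph_eigs_def]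
  show "sorted_wrt (\<ge>) (graph_eigs n E)" by (fact eigs(2))
  show "length (graph_eigs n E) = n" by (rule mat_trace_pow_eq_sum_pow_eigenvalues(1)[OF A eigs(1)])
  show "(\<Sum>i<n. graph_eigs n E ! i ^ 2) = 2 * real (num_edges n E)"
    "(\<Sum>i<n. graph_eigs n E ! i ^ 3) = 6 * real (num_triangles n E)"
    using mat_trace_pow_eq_sum_pow_eigenvalues(2)[OF A eigs(1)] mat_trace_adj_matrix_pow[OF sg]
    by simp_all
qed

theorem lemma2p2:
  fixes n :: nat and E :: "nat \<Rightarrow> nat \<Rightarrow> bool" and k :: nat
  assumes "simple_graph n E"
    and "1 \<le> k" and "k \<le> n_plus n E"
  shows "6 * real (num_triangles n E) \<ge>
           (1 / sqrt (real k)) * (s_k n E k) powr (3/2)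
           - (2 * real (num_edges n E) - s_k n E k) powr (3/2)"
  using sorted_desc_sum_cubes_lower_bound[OF graph_eigs_moments(1)[OF assms(1)] assms(2)]
    assms(3) graph_eigs_moments(2-4)[OF assms(1)]
  unfolding n_plus_def s_k_def by simp

end
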